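(* Let $A$ be an integral domain, $a,b\in A\setminus\{0\}$ relatively prime, and $s,t\in A$ relatively prime with $a=st$ (where $u,v$ relatively prime means $uA\cap vA=uvA$). Let $A[X]$ be a polynomial ring in one variable and $I=(aX-b)A[X]$. Then the following are equivalent: (a) $\bigcap_{i\ge0}(s^iA[X]+I)=I$; (b) $A\cap\bigcap_{i\ge0}(s^iA[X]+I)=0$. Moreover, $A\cap\bigcap_{i\ge0}(s^iA[X]+I)=W(b,s,t)$.
   Context: For elements $b,s,t$ of a ring $A$, define ideals $W_i,J_i$ ($i\ge0$) by $W_0=A$, $J_0=(W_0:t)=A$, and for $i\ge1$: $W_i=bJ_{i-1}+s^iA$ and $J_i=(W_i:t)$, where $(W:t)=\{x\in A: tx\in W\}$. Set $W(b,s,t)=\bigcap_{i\ge0}W_i$. *)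

theory Defs
  imports "HOL-Computational_Algebra.Polynomial"
begin

definition principal_ideal :: "'a::comm_ring_1 \<Rightarrow> 'a set" where
  "principal_ideal u = {u * x | x. True}"

definition rel_prime :: "'a::comm_ring_1 \<Rightarrow> 'a \<Rightarrow> bool" where
  "rel_prime u v \<longleftrightarrow> principal_ideal u \<inter> principal_ideal v = principal_ideal (u * v)"

definition colon :: "'a::comm_ring_1 set \<Rightarrow> 'a \<Rightarrow> 'a set" where
  "colon W t = {x. t * x \<in> W}"

fun Wseq :: "'a::comm_ring_1 \<Rightarrow> 'a \<Rightarrow> 'a \<Rightarrow> nat \<Rightarrow> 'a set" where
  "Wseq b s t 0 = UNIV"
| "Wseq b s t (Suc i) =
     {b * x + s ^ Suc i * y | x y. x \<in> colon (Wseq b s t i) t}"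

definition Jseq :: "'a::comm_ring_1 \<Rightarrow> 'a \<Rightarrow> 'a \<Rightarrow> nat \<Rightarrow> 'a set" where
  "Jseq b s t i = colon (Wseq b s t i) t"

definition Wbst :: "'a::comm_ring_1 \<Rightarrow> 'a \<Rightarrow> 'a \<Rightarrow> 'a set" where
  "Wbst b s t = (\<Inter>i. Wseq b s t i)"

definition lin_ideal :: "'a::comm_ring_1 \<Rightarrow> 'a \<Rightarrow> 'a poly set" where
  "lin_ideal a b = {[:- b, a:] * f | f. True}"

definition pow_plus_ideal :: "'a::comm_ring_1 \<Rightarrow> nat \<Rightarrow> 'a poly set \<Rightarrow> 'a poly set" where
  "pow_plus_ideal s i I = {smult (s ^ i) g + p | g p. p \<in> I}"

end

theory Submission
  imports Defs
begin

text \<open>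
  Write Q = aX - b, so that I = Q A[X]. Since aX = b modulo Q, every F satisfies
  a^m F = c modulo Q for some m and some constant c; as a and b are coprime, a^m F in I
  forces F in I. Hence the intersection of the ideals s^i A[X] + I is I as soon as its only
  constant is 0, and conversely I contains no nonzero constant.

  A constant c = s^(i+1) G + Q H is analysed by separating constant terms from X-parts:
  the constant terms give c = b x + s^(i+1) y with x = -H(0), and the X-part, once divided
  by s (possible because s divides a and a is coprime to b), says that t x is a constant
  of s^i A[X] + I. This is the recursion defining W_i, so the constants of the intersection
  form W(b,s,t).
\<close>

(* Keep products with [:-b, a:] intact; the expansion into coefficients is requested explicitly. *)
declare mult_pCons_left [simp del] mult_pCons_right [simp del]

lemma rel_prime_mult_dvd:
  assumes "rel_prime u v" "u dvd y" "v dvd y"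
  shows "u * v dvd y"
proof -
  have "y \<in> principal_ideal u \<inter> principal_ideal v"
    using assms(2,3) unfolding principal_ideal_def by (auto elim!: dvdE)
  then have "y \<in> principal_ideal (u * v)"
    using assms(1) unfolding rel_prime_def by simp
  then show ?thesis unfolding principal_ideal_def by auto
qed

lemma rel_prime_dvd_cancel:
  fixes a b d :: "'a::idom"
  assumes "rel_prime a b" "a \<noteq> 0" "b \<noteq> 0" "d dvd a" "d dvd b * x"
  shows "d dvd x"
proof -
  obtain e where a: "a = d * e" using assms(4) by blast
  have "a dvd b * (e * x)" using assms(5) unfolding a by (simp add: ac_simps)
  then have "a * b dvd b * (e * x)" using assms(1) by (simp add: rel_prime_mult_dvd)
  then have "d * e dvd x * e" using assms(3) unfolding a by (simp add: ac_simps)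
  then show ?thesis using assms(2) a by simp
qed

lemma const_dvd_lin_mult_cancel:
  fixes a b d :: "'a::idom"
  assumes "rel_prime a b" "a \<noteq> 0" "b \<noteq> 0" "d dvd a" "[:d:] dvd [:-b, a:] * R"
  shows "[:d:] dvd R"
  unfolding const_poly_dvd_iff
proof
  fix n
  have "d dvd coeff ([:-b, a:] * R) n" using assms(5) const_poly_dvd_iff by blast
  moreover have "d dvd coeff (pCons 0 (smult a R)) n"
    using assms(4) by (cases n) auto
  moreover have "b * coeff R n = coeff (pCons 0 (smult a R)) n - coeff ([:-b, a:] * R) n"
    by (simp add: mult_pCons_left)
  ultimately have "d dvd b * coeff R n"
    by (simp add: dvd_diff)
  then show "d dvd coeff R n" using assms rel_prime_dvd_cancel by blast
qed

lemma lin_dvd_smult_power_cancel: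
  fixes a b :: "'a::idom"
  assumes "rel_prime a b" "a \<noteq> 0" "b \<noteq> 0" "[:-b, a:] dvd smult (a ^ m) F"
  shows "[:-b, a:] dvd F"
  using assms(4)
proof (induction m)
  case (Suc m)
  from Suc.prems obtain h where "smult (a ^ Suc m) F = [:-b, a:] * h"
    by (rule dvdE)
  then have h: "[:-b, a:] * h = [:a:] * smult (a ^ m) F"
    by (simp add: mult_pCons_left[of a 0] del: mult_smult_right)
  then have "[:a:] dvd h"
    using const_dvd_lin_mult_cancel[OF assms(1-3) dvd_refl] dvdI[OF h] by blast
  then obtain h' where "h = [:a:] * h'"
    by (rule dvdE)
  with h have "[:a:] * smult (a ^ m) F = [:a:] * ([:-b, a:] * h')"
    by (simp add: mult.left_commute)
  moreover have "[:a:] \<noteq> 0"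
    using assms(2) by simp
  ultimately have "smult (a ^ m) F = [:-b, a:] * h'"
    using mult_left_cancel by blast
  then show ?case
    by (rule Suc.IH[OF dvdI])
qed simp

lemma lin_dvd_const_iff:
  fixes a b c :: "'a::idom"
  assumes "a \<noteq> 0"
  shows "[:-b, a:] dvd [:c:] \<longleftrightarrow> c = 0"
  using dvd_imp_degree_le[of "[:-b, a:]" "[:c:]"] assms by auto

lemma smult_power_eq_const_mod_lin:
  fixes a b :: "'a::comm_ring_1"
  shows "\<exists>m c h. smult (a ^ m) F = [:c:] + [:-b, a:] * h"
proof (induction F rule: pCons_induct)
  case (pCons f F)
  then obtain m c h where IH: "smult (a ^ m) F = [:c:] + [:-b, a:] * h" by blast
  have X_split: "[:0, a:] * p = [:-b, a:] * p + smult b p" for p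
  proof -
    have "[:0, a:] * p = ([:-b, a:] + [:b:]) * p" by simp
    also have "\<dots> = [:-b, a:] * p + smult b p"
      by (simp only: distrib_right) (simp add: mult_pCons_left[of b 0])
    finally show ?thesis .
  qed
  have b_part: "smult b (smult (a ^ m) F) = [:b * c:] + [:-b, a:] * smult b h"
    by (simp add: IH smult_add_right)
  have "smult (a ^ Suc m) (pCons f F) = [:a ^ Suc m * f:] + [:0, a:] * smult (a ^ m) F"
    by (simp add: mult_pCons_left del: mult_smult_right)
  also have "\<dots> = [:a ^ Suc m * f:] + [:-b, a:] * smult (a ^ m) F + smult b (smult (a ^ m) F)"
    by (simp only: X_split add.assoc)
  also have "\<dots> = [:a ^ Suc m * f + b * c:] + [:-b, a:] * (smult (a ^ m) F + smult b h)"
    unfolding b_part by (simp add: algebra_simps)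
  finally show ?case by blast
qed (intro exI[of _ 0], simp)

lemma mem_lin_ideal_iff_dvd: "p \<in> lin_ideal a b \<longleftrightarrow> [:-b, a:] dvd p"
  unfolding lin_ideal_def dvd_def by auto

lemma mem_pow_plus_lin_ideal_iff:
  "p \<in> pow_plus_ideal s i (lin_ideal a b) \<longleftrightarrow> (\<exists>g h. p = smult (s ^ i) g + [:-b, a:] * h)"
  unfolding pow_plus_ideal_def lin_ideal_def by auto

lemma subset_pow_plus_ideal: "I \<subseteq> pow_plus_ideal s i I"
  unfolding pow_plus_ideal_def by (force intro: exI[of _ 0])

lemma smult_diff_in_pow_plus_lin_ideal:
  "p \<in> pow_plus_ideal s i (lin_ideal a b)
    \<Longrightarrow> smult k p - [:-b, a:] * h \<in> pow_plus_ideal s i (lin_ideal a b)"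
proof -
  assume "p \<in> pow_plus_ideal s i (lin_ideal a b)"
  then obtain g f where "p = smult (s ^ i) g + [:-b, a:] * f"
    using mem_pow_plus_lin_ideal_iff by blast
  then have "smult k p - [:-b, a:] * h = smult (s ^ i) (smult k g) + [:-b, a:] * (smult k f - h)"
    by (simp add: algebra_simps smult_add_right)
  then show ?thesis using mem_pow_plus_lin_ideal_iff by blast
qed

lemma const_in_pow_plus_ideal_SucI:
  fixes a b s t x y :: "'a::comm_ring_1"
  assumes "a = s * t" and "[:t * x:] \<in> pow_plus_ideal s i (lin_ideal a b)"
  shows "[:b * x + s ^ Suc i * y:] \<in> pow_plus_ideal s (Suc i) (lin_ideal a b)"
proof -
  obtain G H where GH: "[:t * x:] = smult (s ^ i) G + [:-b, a:] * H"
    using assms(2) mem_pow_plus_lin_ideal_iff by blast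
  have "[:-b, a:] * smult s H = smult s ([:t * x:] - smult (s ^ i) G)"
    by (simp add: GH)
  also have "\<dots> = [:a * x:] - smult (s ^ Suc i) G"
    by (simp add: assms(1) smult_diff_right mult.assoc)
  finally have "[:-b, a:] * pCons (- x) (smult s H)
      = smult (- x) [:-b, a:] + pCons 0 ([:a * x:] - smult (s ^ Suc i) G)"
    by (simp only: mult_pCons_right)
  then have "[:b * x + s ^ Suc i * y:]
      = smult (s ^ Suc i) (pCons y G) + [:-b, a:] * pCons (- x) (smult s H)"
    by simp
  then show ?thesis using mem_pow_plus_lin_ideal_iff by blast
qed

lemma const_in_pow_plus_ideal_SucD:
  fixes a b s t c :: "'a::idom"
  assumes "rel_prime a b" "a \<noteq> 0" "b \<noteq> 0" "a = s * t"
    and "[:c:] \<in> pow_plus_ideal s (Suc i) (lin_ideal a b)"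
  shows "\<exists>x y. c = b * x + s ^ Suc i * y \<and> [:t * x:] \<in> pow_plus_ideal s i (lin_ideal a b)"
proof -
  obtain G H where "[:c:] = smult (s ^ Suc i) G + [:-b, a:] * H"
    using assms(5) mem_pow_plus_lin_ideal_iff by blast
  moreover obtain G0 G1 H0 H1 where G: "G = pCons G0 G1" and H: "H = pCons H0 H1"
    by (meson pCons_cases)
  ultimately have "pCons c 0 = pCons (s ^ Suc i * G0 - b * H0)
      (smult (s ^ Suc i) G1 + [:a * H0:] + [:-b, a:] * H1)"
    by (simp add: mult_pCons_right algebra_simps)
  then have c: "c = b * (- H0) + s ^ Suc i * G0"
    and tail: "smult (s ^ Suc i) G1 + [:a * H0:] + [:-b, a:] * H1 = 0"
    by simp_all
  have "[:s:] * (smult (s ^ i) G1 + [:t * H0:]) = smult (s ^ Suc i) G1 + [:a * H0:]"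
    by (simp add: assms(4) mult_pCons_left[of s 0] smult_add_right mult.assoc)
  also have "\<dots> = [:-b, a:] * (- H1)"
    using tail by (simp only: eq_neg_iff_add_eq_0[symmetric] mult_minus_right)
  finally have s_tail: "[:s:] * (smult (s ^ i) G1 + [:t * H0:]) = [:-b, a:] * (- H1)" .
  then have "[:s:] dvd [:-b, a:] * (- H1)"
    by (rule dvdI[OF sym])
  moreover have "s dvd a"
    using assms(4) by simp
  ultimately have "[:s:] dvd - H1"
    using const_dvd_lin_mult_cancel[OF assms(1-3)] by blast
  then obtain R where "- H1 = [:s:] * R"
    by (rule dvdE)
  with s_tail have "[:s:] * (smult (s ^ i) G1 + [:t * H0:]) = [:s:] * ([:-b, a:] * R)"
    by (simp add: mult.left_commute)
  then have QR: "smult (s ^ i) G1 + [:t * H0:] = [:-b, a:] * R"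
    using assms(2,4) by simp
  have "[:t * (- H0):] = smult (s ^ i) G1 + [:-b, a:] * (- R)"
    by (simp add: QR[symmetric])
  with c show ?thesis
    using mem_pow_plus_lin_ideal_iff by blast
qed

lemma const_in_pow_plus_ideal_Suc_iff:
  fixes a b s t c :: "'a::idom"
  assumes "rel_prime a b" "a \<noteq> 0" "b \<noteq> 0" "a = s * t"
  shows "[:c:] \<in> pow_plus_ideal s (Suc i) (lin_ideal a b) \<longleftrightarrow>
    (\<exists>x y. c = b * x + s ^ Suc i * y \<and> [:t * x:] \<in> pow_plus_ideal s i (lin_ideal a b))"
  using const_in_pow_plus_ideal_SucI[OF assms(4)] const_in_pow_plus_ideal_SucD[OF assms]
  by blast

lemma const_in_pow_plus_ideal_iff_Wseq:
  fixes a b s t c :: "'a::idom"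
  assumes "rel_prime a b" "a \<noteq> 0" "b \<noteq> 0" "a = s * t"
  shows "[:c:] \<in> pow_plus_ideal s i (lin_ideal a b) \<longleftrightarrow> c \<in> Wseq b s t i"
proof (induction i arbitrary: c)
  case 0
  have "[:c:] = smult (s ^ 0) [:c:] + [:-b, a:] * 0" by simp
  then show ?case unfolding mem_pow_plus_lin_ideal_iff Wseq.simps by blast
next
  case (Suc i)
  show ?case
    by (simp add: const_in_pow_plus_ideal_Suc_iff[OF assms] Suc.IH colon_def)
qed

lemma Inter_pow_plus_ideal_subset_lin_ideal:
  fixes a b s :: "'a::idom"
  assumes "rel_prime a b" "a \<noteq> 0" "b \<noteq> 0"
    and no_const: "{c. [:c:] \<in> (\<Inter>i. pow_plus_ideal s i (lin_ideal a b))} = {0}"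
  shows "(\<Inter>i. pow_plus_ideal s i (lin_ideal a b)) \<subseteq> lin_ideal a b"
proof
  fix F assume F: "F \<in> (\<Inter>i. pow_plus_ideal s i (lin_ideal a b))"
  obtain m c h where reduce: "smult (a ^ m) F = [:c:] + [:-b, a:] * h"
    using smult_power_eq_const_mod_lin by blast
  then have "[:c:] = smult (a ^ m) F - [:-b, a:] * h" by simp
  moreover have "smult (a ^ m) F - [:-b, a:] * h \<in> pow_plus_ideal s i (lin_ideal a b)" for i
    using F by (intro smult_diff_in_pow_plus_lin_ideal) blast
  ultimately have "[:c:] \<in> (\<Inter>i. pow_plus_ideal s i (lin_ideal a b))" by simp
  then have "c = 0" using no_const by blast
  then have "[:-b, a:] dvd smult (a ^ m) F" using reduce by simp
  then show "F \<in> lin_ideal a b"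
    using lin_dvd_smult_power_cancel[OF assms(1-3)] by (simp add: mem_lin_ideal_iff_dvd)
qed

theorem lemma3p3:
  fixes a b s t :: "'a::idom"
  assumes "a \<noteq> 0" and "b \<noteq> 0" and "rel_prime a b"
    and "rel_prime s t" and "a = s * t"
  shows "((\<Inter>i. pow_plus_ideal s i (lin_ideal a b)) = lin_ideal a b
           \<longleftrightarrow> {c. [:c:] \<in> (\<Inter>i. pow_plus_ideal s i (lin_ideal a b))} = {0})
         \<and> {c. [:c:] \<in> (\<Inter>i. pow_plus_ideal s i (lin_ideal a b))} = Wbst b s t"
proof -
  define M where "M = (\<Inter>i. pow_plus_ideal s i (lin_ideal a b))"
  have "{c. [:c:] \<in> lin_ideal a b} = {0}"
    by (auto simp: mem_lin_ideal_iff_dvd lin_dvd_const_iff[OF assms(1)])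
  moreover have "lin_ideal a b \<subseteq> M"
    unfolding M_def using subset_pow_plus_ideal by blast
  ultimately have "M = lin_ideal a b \<longleftrightarrow> {c. [:c:] \<in> M} = {0}"
    using Inter_pow_plus_ideal_subset_lin_ideal[OF assms(3,1,2), of s]
    unfolding M_def by (metis subset_antisym)
  moreover have "{c. [:c:] \<in> M} = Wbst b s t"
    using const_in_pow_plus_ideal_iff_Wseq[OF assms(3,1,2,5)] unfolding M_def Wbst_def by auto
  ultimately show ?thesis unfolding M_def by blast
qed

end
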